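(* Let $n\ge1$, $v>0$, $0\le\rho<\frac12v$, and let $B=(b_{jk})_{j,k=0}^n$ with $b_{jk}=v-k$ if $j>k$, $b_{kk}=\frac v2-k-\rho$, $b_{jk}=-j$ if $j<k$. The unique ESS $\mathbf{p}=(p_0,\dots,p_n)^T$ of $B$ is given as follows. If $v\ge2n+2\rho$, then $p_0=\dots=p_{n-1}=0$, $p_n=1$. Otherwise there is a unique index $s\in\{0,\dots,n-1\}$ such that $n-1+\rho\le\frac v2+s<n+\rho$, and $$p_k=\frac1c\Big(-\frac v2-\rho\Big)^k\Big\{u_{s-k+1}+\Big(s+1-n+\frac v2+\rho\Big)u_{s-k}+(s+1-n)\Big(\frac v2+\rho\Big)u_{s-k-1}\Big\},\quad0\le k\le s,$$ $$p_k=0,\quad s+1\le k\le n-1,\qquad p_n=\frac1c\Big(-\frac v2-\rho\Big)^{s+1},$$ where $\gamma=\sqrt{\frac{v^2}{4}-\rho^2}$, $u_k=(-i\gamma)^kU_k\big(-\frac{i(2\rho+1)}{2\gamma}\big)$ and $$c=-u_{s+2}+(n-s-1-2\rho)u_{s+1}+\{2\rho(n-s-1)+\gamma^2\}u_s-(n-s-1)\gamma^2u_{s-1}.$$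
   Context: $U_m$ denotes the $m$th Chebyshev polynomial of the second kind (evaluated at complex arguments as a polynomial), with the convention $U_{-1}\equiv0$; $i=\sqrt{-1}$. Strategies are indexed $0,\dots,n$, $\overline\Delta=\{\mathbf{q}\in[0,1]^{n+1}:\sum q_j=1\}$. $\mathbf{p}\in\overline\Delta$ is an ESS for $B$ if (i) $\mathbf{p}^TB\mathbf{p}\ge\mathbf{q}^TB\mathbf{p}$ for all $\mathbf{q}\in\overline\Delta$ and (ii) whenever $\mathbf{q}\ne\mathbf{p}$ and $\mathbf{p}^TB\mathbf{p}=\mathbf{q}^TB\mathbf{p}$, then $\mathbf{p}^TB\mathbf{q}>\mathbf{q}^TB\mathbf{q}$. *)

theory Defs
  imports Complex_Main
begin

fun chebU :: "nat \<Rightarrow> complex \<Rightarrow> complex" where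
  "chebU 0 x = 1"
| "chebU (Suc 0) x = 2 * x"
| "chebU (Suc (Suc m)) x = 2 * x * chebU (Suc m) x - chebU m x"

definition chebU_int :: "int \<Rightarrow> complex \<Rightarrow> complex" where
  "chebU_int m x = (if m < 0 then 0 else chebU (nat m) x)"

text \<open>Strategies are indexed 0..n; a mixed strategy is a function nat => real, only values on {0..n} matter.\<close>
definition simplex :: "nat \<Rightarrow> (nat \<Rightarrow> real) \<Rightarrow> bool" where
  "simplex n q \<longleftrightarrow> (\<forall>j\<le>n. 0 \<le> q j \<and> q j \<le> 1) \<and> (\<Sum>j\<le>n. q j) = 1"

definition bilin :: "nat \<Rightarrow> (nat \<Rightarrow> nat \<Rightarrow> real) \<Rightarrow> (nat \<Rightarrow> real) \<Rightarrow> (nat \<Rightarrow> real) \<Rightarrow> real" where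
  "bilin n B q p = (\<Sum>j\<le>n. \<Sum>k\<le>n. q j * B j k * p k)"

definition ESS :: "nat \<Rightarrow> (nat \<Rightarrow> nat \<Rightarrow> real) \<Rightarrow> (nat \<Rightarrow> real) \<Rightarrow> bool" where
  "ESS n B p \<longleftrightarrow> simplex n p \<and>
     (\<forall>q. simplex n q \<longrightarrow> bilin n B p p \<ge> bilin n B q p) \<and>
     (\<forall>q. simplex n q \<and> (\<exists>j\<le>n. q j \<noteq> p j) \<and> bilin n B p p = bilin n B q p
          \<longrightarrow> bilin n B p q > bilin n B q q)"

definition payoffB :: "real \<Rightarrow> real \<Rightarrow> nat \<Rightarrow> nat \<Rightarrow> real" where
  "payoffB v \<rho> j k = (if j > k then v - real k
                      else if j = k then v / 2 - real k - \<rho>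
                      else - real j)"

definition gam :: "real \<Rightarrow> real \<Rightarrow> real" where
  "gam v \<rho> = sqrt (v^2 / 4 - \<rho>^2)"

definition uu :: "real \<Rightarrow> real \<Rightarrow> int \<Rightarrow> complex" where
  "uu v \<rho> k = (if k < 0 then 0 else
      (- \<i> * complex_of_real (gam v \<rho>)) ^ nat k *
      chebU_int k (- \<i> * complex_of_real (2 * \<rho> + 1) / (2 * complex_of_real (gam v \<rho>))))"

definition cc :: "nat \<Rightarrow> real \<Rightarrow> real \<Rightarrow> nat \<Rightarrow> complex" where
  "cc n v \<rho> s = (let g = complex_of_real (gam v \<rho>); m = of_int (int n - int s - 1) :: complex in
      - uu v \<rho> (int s + 2) + (m - 2 * complex_of_real \<rho>) * uu v \<rho> (int s + 1)
      + (2 * complex_of_real \<rho> * m + g^2) * uu v \<rho> (int s)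
      - m * g^2 * uu v \<rho> (int s - 1))"

end

theory Submission
  imports Defs
begin

(* The symmetric part of the payoff matrix is v 1 1^T - 2 min(j,k) - 2 rho I, and
   min(j,k) = sum over l in {1..n} of [l <= j][l <= k] is a Gram matrix. Hence x^T B x < 0 for
   every nonzero x with zero sum, which makes any symmetric Nash equilibrium the unique ESS.
   So it suffices to exhibit a Nash equilibrium. If v >= 2n + 2 rho, the pure strategy n is one.
   Otherwise put a = v/2 + rho and b = v/2 - rho, and let s be the index with
   n - s - 1 <= b < n - s. The equilibrium is supported on {0..s} and {n}: equal payoffs of
   consecutive pure strategies in {0..s} amount to a three-term recurrence, which is solved by the
   Lucas sequence L with L(k+2) = (a - b + 1) L(k+1) + a b L(k). Since u_k = (-1)^k L(k+1), this
   yields the Chebyshev expressions of the theorem. *)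

section \<open>Symmetric Nash equilibria and evolutionary stability\<close>

definition row_payoff :: "nat \<Rightarrow> (nat \<Rightarrow> nat \<Rightarrow> real) \<Rightarrow> nat \<Rightarrow> (nat \<Rightarrow> real) \<Rightarrow> real" where
  "row_payoff n B j p = (\<Sum>k\<le>n. B j k * p k)"

definition nash :: "nat \<Rightarrow> (nat \<Rightarrow> nat \<Rightarrow> real) \<Rightarrow> (nat \<Rightarrow> real) \<Rightarrow> bool" where
  "nash n B p \<longleftrightarrow> simplex n p \<and> (\<forall>q. simplex n q \<longrightarrow> bilin n B q p \<le> bilin n B p p)"

definition negdef_on_zero_sum :: "nat \<Rightarrow> (nat \<Rightarrow> nat \<Rightarrow> real) \<Rightarrow> bool" where
  "negdef_on_zero_sum n B \<longleftrightarrow>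
     (\<forall>x. (\<Sum>j\<le>n. x j) = 0 \<longrightarrow> (\<exists>j\<le>n. x j \<noteq> 0) \<longrightarrow> bilin n B x x < 0)"

lemma bilin_eq_sum_row_payoff: "bilin n B q p = (\<Sum>j\<le>n. q j * row_payoff n B j p)"
  by (simp add: bilin_def row_payoff_def sum_distrib_left mult.assoc)

lemma bilin_diff_diff:
  "bilin n B (\<lambda>j. p j - q j) (\<lambda>j. p j - q j)
   = bilin n B p p - bilin n B p q - bilin n B q p + bilin n B q q"
  by (simp add: bilin_def algebra_simps sum_subtractf sum.distrib)

lemma nash_imp_unique_ESS:
  assumes negdef: "negdef_on_zero_sum n B" and "nash n B p"
  shows "ESS n B p \<and> (\<forall>q. ESS n B q \<longrightarrow> (\<forall>j\<le>n. q j = p j))"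
proof -
  have p: "simplex n p" and best: "\<And>q. simplex n q \<Longrightarrow> bilin n B q p \<le> bilin n B p p"
    using \<open>nash n B p\<close> by (auto simp: nash_def)
  have strict: "bilin n B p q - bilin n B q q > bilin n B p p - bilin n B q p"
    if q: "simplex n q" and "\<exists>j\<le>n. q j \<noteq> p j" for q
  proof -
    have "(\<Sum>j\<le>n. p j - q j) = 0" using p q by (simp add: simplex_def sum_subtractf)
    moreover have "\<exists>j\<le>n. p j - q j \<noteq> 0" using that(2) by auto
    ultimately have "bilin n B (\<lambda>j. p j - q j) (\<lambda>j. p j - q j) < 0"
      using negdef by (simp add: negdef_on_zero_sum_def)
    then show ?thesis by (simp add: bilin_diff_diff)
  qed
  have "ESS n B p"
    unfolding ESS_def using p best strict by force
  moreover have "\<forall>j\<le>n. q j = p j" if "ESS n B q" for q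
  proof (rule ccontr)
    assume "\<not> (\<forall>j\<le>n. q j = p j)"
    moreover have q: "simplex n q" and "bilin n B p q \<le> bilin n B q q"
      using \<open>ESS n B q\<close> p by (auto simp: ESS_def)
    ultimately show False using strict[OF q] best[OF q] by auto
  qed
  ultimately show ?thesis by blast
qed

lemma nash_if_equalizer:
  assumes p: "simplex n p"
    and le: "\<And>j. j \<le> n \<Longrightarrow> row_payoff n B j p \<le> E"
    and eq: "\<And>j. j \<le> n \<Longrightarrow> p j \<noteq> 0 \<Longrightarrow> row_payoff n B j p = E"
  shows "nash n B p"
proof -
  have "bilin n B q p \<le> E" if q: "simplex n q" for q
  proof -
    have "bilin n B q p \<le> (\<Sum>j\<le>n. q j * E)"
      unfolding bilin_eq_sum_row_payoff using q le
      by (intro sum_mono mult_left_mono) (auto simp: simplex_def)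
    also have "\<dots> = E" using q by (simp add: simplex_def flip: sum_distrib_right)
    finally show ?thesis .
  qed
  moreover have "bilin n B p p = E"
  proof -
    have "bilin n B p p = (\<Sum>j\<le>n. p j * E)"
      unfolding bilin_eq_sum_row_payoff by (intro sum.cong refl) (metis atMost_iff eq mult_zero_left)
    also have "\<dots> = E" using p by (simp add: simplex_def flip: sum_distrib_right)
    finally show ?thesis .
  qed
  ultimately show ?thesis using p by (simp add: nash_def)
qed

section \<open>The payoff matrix\<close>

lemma row_payoff_payoffB:
  assumes "j \<le> n"
  shows "row_payoff n (payoffB v \<rho>) j p
    = (\<Sum>k<j. (v - real k) * p k) + (v/2 - real j - \<rho>) * p j - real j * (\<Sum>k\<in>{j<..n}. p k)"
  using assms
proof (induction n rule: dec_induct)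
  case base
  have "(\<Sum>k<j. payoffB v \<rho> j k * p k) = (\<Sum>k<j. (v - real k) * p k)"
    by (rule sum.cong) (auto simp: payoffB_def)
  then show ?case by (simp add: row_payoff_def payoffB_def flip: lessThan_Suc_atMost)
next
  case (step m)
  have "{j<..Suc m} = insert (Suc m) {j<..m}" using step by auto
  then show ?case using step by (simp add: row_payoff_def payoffB_def algebra_simps)
qed

lemma row_payoff_payoffB_Suc_diff:
  assumes "Suc j \<le> n"
  shows "row_payoff n (payoffB v \<rho>) (Suc j) p - row_payoff n (payoffB v \<rho>) j p
    = (v/2 + \<rho>) * p j + (v/2 - \<rho> - 1) * p (Suc j) - (\<Sum>k\<in>{Suc j<..n}. p k)"
proof -
  have "{j<..n} = insert (Suc j) {Suc j<..n}" using assms by auto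
  then show ?thesis using assms
    by (simp add: row_payoff_payoffB algebra_simps)
qed

lemma payoffB_add_transpose:
  "payoffB v \<rho> j k + payoffB v \<rho> k j = v - 2 * real (min j k) - (if j = k then 2 * \<rho> else 0)"
  by (auto simp: payoffB_def min_def)

lemma sum_min_quadratic:
  "(\<Sum>j\<le>n. \<Sum>k\<le>n. x j * x k * real (min j k)) = (\<Sum>l\<in>{1..n}. (\<Sum>j\<in>{l..n}. x j)\<^sup>2)"
proof -
  have min_count: "real (min j k) = (\<Sum>l\<in>{1..n}. if l \<le> j \<and> l \<le> k then 1 else 0)"
    if "j \<le> n" "k \<le> n" for j k
  proof -
    have "{1..n} \<inter> {l. l \<le> j \<and> l \<le> k} = {1..min j k}" using that by auto
    then show ?thesis by (simp add: sum.If_cases)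
  qed
  have tail: "(\<Sum>j\<in>{l..n}. x j) = (\<Sum>j\<le>n. if l \<le> j then x j else 0)" for l
  proof -
    have "{..n} \<inter> {j. l \<le> j} = {l..n}" by auto
    then show ?thesis by (simp add: sum.If_cases)
  qed
  have "(\<Sum>j\<le>n. \<Sum>k\<le>n. x j * x k * real (min j k))
      = (\<Sum>j\<le>n. \<Sum>k\<le>n. \<Sum>l\<in>{1..n}. (if l \<le> j then x j else 0) * (if l \<le> k then x k else 0))"
    by (intro sum.cong refl) (auto simp: min_count sum_distrib_left intro!: sum.cong)
  also have "\<dots> = (\<Sum>l\<in>{1..n}. \<Sum>j\<le>n. \<Sum>k\<le>n. (if l \<le> j then x j else 0) * (if l \<le> k then x k else 0))"
    by (subst sum.swap) (subst (2) sum.swap, rule refl)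
  also have "\<dots> = (\<Sum>l\<in>{1..n}. (\<Sum>j\<in>{l..n}. x j)\<^sup>2)"
    unfolding tail power2_eq_square sum_product by simp
  finally show ?thesis .
qed

lemma zero_if_tail_sums_zero:
  fixes x :: "nat \<Rightarrow> real"
  assumes "\<And>l. l \<le> n \<Longrightarrow> (\<Sum>j\<in>{l..n}. x j) = 0" and "j \<le> n"
  shows "x j = 0"
proof -
  have "{j..n} = insert j {Suc j..n}" using \<open>j \<le> n\<close> by auto
  then have "(\<Sum>i\<in>{j..n}. x i) = x j + (\<Sum>i\<in>{Suc j..n}. x i)" by simp
  moreover have "(\<Sum>i\<in>{Suc j..n}. x i) = 0" using assms by (cases "Suc j \<le> n") auto
  ultimately show ?thesis using assms by simp
qed

lemma bilin_payoffB_zero_sum: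
  assumes "(\<Sum>j\<le>n. x j) = 0"
  shows "bilin n (payoffB v \<rho>) x x
    = - (\<Sum>l\<in>{1..n}. (\<Sum>j\<in>{l..n}. x j)\<^sup>2) - \<rho> * (\<Sum>j\<le>n. (x j)\<^sup>2)"
proof -
  let ?B = "payoffB v \<rho>"
  have "2 * bilin n ?B x x = (\<Sum>j\<le>n. \<Sum>k\<le>n. x j * x k * (?B j k + ?B k j))"
    unfolding mult_2 bilin_def
    by (subst (2) sum.swap) (simp add: algebra_simps sum.distrib)
  also have "\<dots> = (\<Sum>j\<le>n. \<Sum>k\<le>n. x j * x k * v)
      - 2 * (\<Sum>j\<le>n. \<Sum>k\<le>n. x j * x k * real (min j k))
      - (\<Sum>j\<le>n. \<Sum>k\<le>n. x j * x k * (if j = k then 2 * \<rho> else 0))"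
    unfolding payoffB_add_transpose
    by (simp add: algebra_simps sum_subtractf sum_distrib_left sum.distrib)
  also have "(\<Sum>j\<le>n. \<Sum>k\<le>n. x j * x k * v) = 0"
    using assms by (simp add: mult.assoc flip: sum_distrib_left sum_distrib_right)
  also have "(\<Sum>j\<le>n. \<Sum>k\<le>n. x j * x k * (if j = k then 2 * \<rho> else 0))
      = 2 * \<rho> * (\<Sum>j\<le>n. (x j)\<^sup>2)"
    by (simp add: sum_distrib_left if_distrib power2_eq_square mult_ac cong: if_cong)
  finally show ?thesis by (simp add: sum_min_quadratic)
qed

lemma negdef_payoffB:
  assumes "0 \<le> \<rho>"
  shows "negdef_on_zero_sum n (payoffB v \<rho>)"
  unfolding negdef_on_zero_sum_def
proof (intro allI impI)
  fix x :: "nat \<Rightarrow> real"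
  assume sum0: "(\<Sum>j\<le>n. x j) = 0" and "\<exists>j\<le>n. x j \<noteq> 0"
  have "\<exists>l\<in>{1..n}. (\<Sum>j\<in>{l..n}. x j) \<noteq> 0"
  proof (rule ccontr)
    assume "\<not> (\<exists>l\<in>{1..n}. (\<Sum>j\<in>{l..n}. x j) \<noteq> 0)"
    then have "(\<Sum>j\<in>{l..n}. x j) = 0" if "l \<le> n" for l
      using sum0 that by (cases "l = 0") (auto simp: atLeast0AtMost)
    then show False using zero_if_tail_sums_zero \<open>\<exists>j\<le>n. x j \<noteq> 0\<close> by blast
  qed
  then obtain l where "l \<in> {1..n}" "(\<Sum>j\<in>{l..n}. x j) \<noteq> 0" by blast
  then have "(\<Sum>l\<in>{1..n}. (\<Sum>j\<in>{l..n}. x j)\<^sup>2) > 0"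
    by (intro sum_pos2[of _ l]) auto
  moreover have "\<rho> * (\<Sum>j\<le>n. (x j)\<^sup>2) \<ge> 0" using assms by (simp add: sum_nonneg)
  ultimately show "bilin n (payoffB v \<rho>) x x < 0"
    using sum0 by (simp add: bilin_payoffB_zero_sum)
qed

lemma last_pure_nash:
  assumes "2 * real n + 2 * \<rho> \<le> v"
  shows "nash n (payoffB v \<rho>) (\<lambda>k. if k = n then 1 else 0)"
proof -
  have payoff: "row_payoff n (payoffB v \<rho>) j (\<lambda>k. if k = n then 1 else 0) = payoffB v \<rho> j n" for j
    by (simp add: row_payoff_def if_distrib cong: if_cong)
  show ?thesis
    using assms by (intro nash_if_equalizer) (auto simp: simplex_def payoff payoffB_def)
qed

section \<open>Lucas sequences and Chebyshev polynomials\<close>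

fun lucas :: "'a::comm_ring_1 \<Rightarrow> 'a \<Rightarrow> nat \<Rightarrow> 'a" where
  "lucas P Q 0 = 0"
| "lucas P Q (Suc 0) = 1"
| "lucas P Q (Suc (Suc k)) = P * lucas P Q (Suc k) - Q * lucas P Q k"

lemma lucas_pos:
  fixes P Q :: real
  assumes "P > 0" "Q \<le> 0"
  shows "0 \<le> lucas P Q k \<and> 0 < lucas P Q (Suc k)"
proof (induction k)
  case (Suc k)
  have "P * lucas P Q (Suc k) > 0" "Q * lucas P Q k \<le> 0"
    using Suc assms by (simp_all add: mult_nonpos_nonneg)
  then show ?case using Suc by simp
qed simp

lemma of_real_lucas: "of_real (lucas P Q k) = lucas (of_real P) (of_real Q) k"
  by (induction P Q k rule: lucas.induct) simp_all

lemma lucas_uminus: "lucas (- P) Q k = (-1) ^ Suc k * lucas P Q k"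
  by (induction P Q k rule: lucas.induct) (simp_all add: algebra_simps)

lemma chebU_eq_lucas: "Z ^ k * chebU k x = lucas (2 * Z * x) (Z\<^sup>2) (Suc k)"
proof (induction k x rule: chebU.induct)
  case (3 m x)
  have "Z ^ Suc (Suc m) * chebU (Suc (Suc m)) x
      = 2 * Z * x * (Z ^ Suc m * chebU (Suc m) x) - Z\<^sup>2 * (Z ^ m * chebU m x)"
    by (simp add: algebra_simps power2_eq_square)
  then show ?case using 3 by simp
qed simp_all

lemma gam_pos_square:
  assumes "\<bar>\<rho>\<bar> < v / 2"
  shows "gam v \<rho> > 0" "(gam v \<rho>)\<^sup>2 = (v/2 + \<rho>) * (v/2 - \<rho>)"
proof -
  have "\<rho>\<^sup>2 < (v/2)\<^sup>2" using assms power_strict_mono[of "\<bar>\<rho>\<bar>" "v/2" 2] by simp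
  then have "v\<^sup>2 / 4 - \<rho>\<^sup>2 > 0" by (simp add: power_divide)
  then show "gam v \<rho> > 0" "(gam v \<rho>)\<^sup>2 = (v/2 + \<rho>) * (v/2 - \<rho>)"
    by (simp_all add: gam_def power2_eq_square algebra_simps)
qed

(* The index is shifted by one so that the convention u_(-1) = 0 is the case k = 0. *)
lemma uu_eq_lucas:
  assumes "\<bar>\<rho>\<bar> < v / 2"
  shows "uu v \<rho> (int k - 1) = of_real ((-1) ^ Suc k * lucas (2 * \<rho> + 1) (- (gam v \<rho>)\<^sup>2) k)"
proof (cases k)
  case (Suc j)
  define Z where "Z = - \<i> * complex_of_real (gam v \<rho>)"
  define x where "x = - \<i> * complex_of_real (2 * \<rho> + 1) / (2 * complex_of_real (gam v \<rho>))"
  have "2 * Z * x = - of_real (2 * \<rho> + 1)"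
    using gam_pos_square(1)[OF assms] by (simp add: Z_def x_def field_simps)
  moreover have "Z\<^sup>2 = of_real (- (gam v \<rho>)\<^sup>2)"
    by (simp add: Z_def power_mult_distrib)
  moreover have "uu v \<rho> (int k - 1) = Z ^ j * chebU j x"
    by (simp add: Suc uu_def chebU_int_def Z_def x_def)
  ultimately have "uu v \<rho> (int k - 1)
      = lucas (- of_real (2 * \<rho> + 1)) (of_real (- (gam v \<rho>)\<^sup>2)) k"
    by (simp only: chebU_eq_lucas Suc)
  then show ?thesis
    by (simp only: lucas_uminus of_real_lucas of_real_mult of_real_power of_real_minus of_real_1)
qed (simp add: uu_def)

section \<open>The equilibrium supported on {0..s} and {n}\<close>

locale support_index =
  fixes n s :: nat and v \<rho> :: real
  assumes rho_nonneg: "0 \<le> \<rho>" and rho_less: "\<rho> < v / 2"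
    and s_lower: "real n - 1 + \<rho> \<le> v / 2 + real s"
    and s_upper: "v / 2 + real s < real n + \<rho>"
begin

definition a :: real where "a = v / 2 + \<rho>"
definition b :: real where "b = v / 2 - \<rho>"
definition m :: real where "m = real n - real s - 1"

definition L :: "nat \<Rightarrow> real" where "L k = lucas (2 * \<rho> + 1) (- (a * b)) k"

(* With u_j = (-1)^j L (j + 1) (lemma uu_eq_L), the brace in the theorem's formula for p_k
   equals (-1)^(s-k+1) f (s - k), and c equals (-1)^(s+1) normalizer s. *)
definition f :: "nat \<Rightarrow> real" where
  "f j = L (j + 2) - (a - m) * L (j + 1) - m * a * L j"

definition normalizer :: "nat \<Rightarrow> real" where
  "normalizer j = L (j + 3) + (m - (a - b)) * L (j + 2) - ((a - b) * m + a * b) * L (j + 1)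
     - m * a * b * L j"

definition weight :: "nat \<Rightarrow> real" where
  "weight k = (if k \<le> s then a ^ k * f (s - k) else if k = n then a ^ (s + 1) else 0)"

definition strategy :: "nat \<Rightarrow> real" where
  "strategy k = weight k / normalizer s"

lemma a_pos: "a > 0" and b_pos: "b > 0" and m_le_b: "m \<le> b" and b_less: "b < m + 1"
  and s_less: "s < n"
  using rho_nonneg rho_less s_lower s_upper by (auto simp: a_def b_def m_def)

lemma L_0 [simp]: "L 0 = 0" and L_1 [simp]: "L (Suc 0) = 1"
  by (simp_all add: L_def)

lemma L_Suc_Suc: "L (Suc (Suc k)) = (a - b + 1) * L (Suc k) + a * b * L k"
  by (simp add: L_def a_def b_def)

lemma L_nonneg: "0 \<le> L k" and L_Suc_pos: "0 < L (Suc k)"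
  using lucas_pos[of "2 * \<rho> + 1" "- (a * b)" k] rho_nonneg a_pos b_pos by (simp_all add: L_def)

lemma f_eq: "f j = (m + 1 - b) * L (Suc j) + a * (b - m) * L j"
  by (simp add: f_def numeral_eq_Suc L_Suc_Suc algebra_simps)

lemma f_pos: "0 < f j"
proof -
  have "0 < (m + 1 - b) * L (Suc j)" using b_less L_Suc_pos by simp
  moreover have "0 \<le> a * (b - m) * L j" using a_pos m_le_b L_nonneg by simp
  ultimately show ?thesis by (simp add: f_eq)
qed

lemma f_0: "f 0 = m + 1 - b" and f_1: "f (Suc 0) + (b - 1) * f 0 = a"
  by (simp_all add: f_eq L_Suc_Suc algebra_simps)

lemma f_Suc_Suc: "f (Suc (Suc j)) = (a - b + 1) * f (Suc j) + a * b * f j"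
  by (simp add: f_eq L_Suc_Suc algebra_simps)

lemma normalizer_eq_sum: "(\<Sum>k\<le>j. a ^ k * f (j - k)) + a ^ Suc j = normalizer j"
proof (induction j)
  case 0
  then show ?case by (simp add: f_def normalizer_def numeral_eq_Suc L_Suc_Suc algebra_simps)
next
  case (Suc j)
  have "(\<Sum>k\<le>Suc j. a ^ k * f (Suc j - k)) + a ^ Suc (Suc j)
      = f (Suc j) + a * ((\<Sum>k\<le>j. a ^ k * f (j - k)) + a ^ Suc j)"
    by (subst sum.atMost_Suc_shift) (simp add: sum_distrib_left distrib_left mult.assoc)
  also have "\<dots> = normalizer (Suc j)"
    unfolding Suc.IH by (simp add: f_def normalizer_def numeral_eq_Suc L_Suc_Suc algebra_simps)
  finally show ?case .
qed

lemma weight_pos: "k \<le> s \<or> k = n \<Longrightarrow> 0 < weight k"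
  using a_pos f_pos by (auto simp: weight_def)

lemma weight_nonneg: "0 \<le> weight k"
  using weight_pos[of k] by (auto simp: weight_def)

lemma weight_eq_0: "s < k \<Longrightarrow> k \<noteq> n \<Longrightarrow> weight k = 0"
  by (simp add: weight_def)

lemma sum_weight_greaterThan:
  assumes "s \<le> j" "j < n"
  shows "(\<Sum>k\<in>{j<..n}. weight k) = a ^ (s + 1)"
proof -
  have "(\<Sum>k\<in>{j<..n}. weight k) = (\<Sum>k\<in>{n}. weight k)"
    using assms by (intro sum.mono_neutral_right) (auto simp: weight_eq_0)
  then show ?thesis using s_less by (simp add: weight_def)
qed

lemma sum_weight: "(\<Sum>k\<le>n. weight k) = normalizer s"
proof -
  have "{..n} = {..s} \<union> {s<..n}" using s_less by auto
  then have "(\<Sum>k\<le>n. weight k) = (\<Sum>k\<le>s. weight k) + (\<Sum>k\<in>{s<..n}. weight k)"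
    by (simp add: sum.union_disjoint ivl_disj_int_one(3))
  also have "\<dots> = (\<Sum>k\<le>s. a ^ k * f (s - k)) + a ^ Suc s"
    using s_less by (simp add: sum_weight_greaterThan weight_def)
  finally show ?thesis by (simp only: normalizer_eq_sum)
qed

lemma normalizer_pos: "0 < normalizer s"
proof -
  have "0 < (\<Sum>k\<le>n. weight k)"
    using weight_pos[of n] weight_nonneg by (intro sum_pos2[of _ n]) auto
  then show ?thesis by (simp add: sum_weight)
qed

lemma simplex_strategy: "simplex n strategy"
proof -
  have "weight j \<le> normalizer s" if "j \<le> n" for j
    unfolding sum_weight[symmetric] using that weight_nonneg by (intro member_le_sum) auto
  then show ?thesis using normalizer_pos weight_nonneg
    by (simp add: simplex_def strategy_def sum_weight flip: sum_divide_distrib)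
qed

lemma weight_Suc_Suc:
  assumes "Suc (Suc i) \<le> s"
  shows "a * weight i = (a - b + 1) * weight (Suc i) + b * weight (Suc (Suc i))"
proof -
  define J where "J = s - Suc (Suc i)"
  have "s - i = Suc (Suc J)" "s - Suc i = Suc J" "s - Suc (Suc i) = J"
    using assms by (auto simp: J_def)
  then show ?thesis using assms by (simp add: weight_def f_Suc_Suc algebra_simps)
qed

lemma weight_equalizes:
  assumes "j < s"
  shows "a * weight j + (b - 1) * weight (Suc j) = (\<Sum>k\<in>{Suc j<..n}. weight k)"
proof -
  have "j \<le> s - 1" using assms by simp
  then show ?thesis
  proof (induction j rule: inc_induct)
    case base
    have "a * a ^ (s - 1) = a ^ s" using assms by (cases s) auto
    then have "a * weight (s - 1) + (b - 1) * weight s = a ^ s * (f 1 + (b - 1) * f 0)"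
      using assms by (simp add: weight_def algebra_simps)
    then show ?case using assms s_less by (simp add: f_1 sum_weight_greaterThan)
  next
    case (step i)
    have "{Suc i<..n} = insert (Suc (Suc i)) {Suc (Suc i)<..n}" using step s_less by auto
    then show ?case using step weight_Suc_Suc[of i] by (simp add: algebra_simps)
  qed
qed

abbreviation weight_payoff :: "nat \<Rightarrow> real" where
  "weight_payoff j \<equiv> row_payoff n (payoffB v \<rho>) j weight"

lemma weight_payoff_support: "j \<le> s \<Longrightarrow> weight_payoff j = weight_payoff 0"
proof (induction j)
  case (Suc j)
  then have "weight_payoff (Suc j) - weight_payoff j = 0"
    using row_payoff_payoffB_Suc_diff[of j n v \<rho> weight] weight_equalizes[of j] s_less
    by (simp add: a_def b_def)
  then show ?case using Suc by simp
qed simp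

lemma weight_payoff_beyond:
  assumes "s < j" "j \<le> n"
  shows "weight_payoff j = weight_payoff s + (if j = n then 0 else (real n - b - real j) * a ^ (s + 1))"
proof -
  define A where "A = (\<Sum>k\<le>s. (v - real k) * weight k)"
  have "(\<Sum>k<j. (v - real k) * weight k) = A"
    unfolding A_def using assms by (intro sum.mono_neutral_right) (auto simp: weight_eq_0)
  then have "weight_payoff j = A + (if j = n then b - real n else - real j) * a ^ (s + 1)"
    using assms sum_weight_greaterThan[of j] s_less
    by (auto simp: row_payoff_payoffB weight_def b_def)
  moreover have "weight_payoff s = A - (real n - b) * a ^ (s + 1)"
  proof -
    have "weight_payoff s = (\<Sum>k<s. (v - real k) * weight k) + (b - real s) * weight s
        - real s * a ^ (s + 1)"
      using sum_weight_greaterThan[of s] s_less by (simp add: row_payoff_payoffB b_def)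
    moreover have "A = (\<Sum>k<s. (v - real k) * weight k) + (a + b - real s) * weight s"
      by (simp add: A_def a_def b_def flip: lessThan_Suc_atMost)
    moreover have "a * weight s = (m + 1 - b) * a ^ (s + 1)"
      by (simp add: weight_def f_0 algebra_simps)
    ultimately show ?thesis by (simp add: m_def algebra_simps)
  qed
  ultimately show ?thesis by (simp add: algebra_simps)
qed

lemma strategy_nash: "nash n (payoffB v \<rho>) strategy"
proof (rule nash_if_equalizer[OF simplex_strategy])
  have payoff: "row_payoff n (payoffB v \<rho>) j strategy = weight_payoff j / normalizer s" for j
    by (simp add: row_payoff_def strategy_def sum_divide_distrib)
  have le: "weight_payoff j \<le> weight_payoff s" and eq: "j = n \<Longrightarrow> weight_payoff j = weight_payoff s"
    if "j \<le> n" "s < j" for j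
  proof -
    have "real n - b - real j \<le> 0" using that m_le_b by (simp add: m_def)
    then have "(real n - b - real j) * a ^ (s + 1) \<le> 0" using a_pos by (simp add: mult_nonpos_nonneg)
    then show "weight_payoff j \<le> weight_payoff s" "j = n \<Longrightarrow> weight_payoff j = weight_payoff s"
      using weight_payoff_beyond[OF that(2,1)] by auto
  qed
  fix j assume "j \<le> n"
  show "row_payoff n (payoffB v \<rho>) j strategy \<le> weight_payoff s / normalizer s"
    using weight_payoff_support[of j] weight_payoff_support[of s] le[of j] \<open>j \<le> n\<close> normalizer_pos
    by (cases "j \<le> s") (auto simp: payoff divide_right_mono)
  assume "strategy j \<noteq> 0"
  then have "j \<le> s \<or> j = n" using weight_eq_0[of j] by (cases "s < j") (auto simp: strategy_def)
  then show "row_payoff n (payoffB v \<rho>) j strategy = weight_payoff s / normalizer s"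
    using weight_payoff_support[of j] weight_payoff_support[of s] eq[of j] s_less
    by (auto simp: payoff)
qed

lemma uu_eq_L: "uu v \<rho> (int k - 1) = of_real ((-1) ^ Suc k * L k)"
proof -
  have "\<bar>\<rho>\<bar> < v / 2" using rho_nonneg rho_less by simp
  then show ?thesis using uu_eq_lucas[of \<rho> v k] gam_pos_square(2)[of \<rho> v]
    by (simp add: L_def a_def b_def)
qed

lemma cc_eq_normalizer: "cc n v \<rho> s = of_real ((-1) ^ Suc s * normalizer s)"
proof -
  have "\<bar>\<rho>\<bar> < v / 2" using rho_nonneg rho_less by simp
  then have gam: "(complex_of_real (gam v \<rho>))\<^sup>2 = of_real (a * b)"
    using gam_pos_square(2)[of \<rho> v] by (simp add: a_def b_def flip: of_real_power)
  have u: "uu v \<rho> (int s + 2) = (-1) ^ s * of_real (L (s + 3))"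
    "uu v \<rho> (int s + 1) = - ((-1) ^ s * of_real (L (s + 2)))"
    "uu v \<rho> (int s) = (-1) ^ s * of_real (L (s + 1))"
    "uu v \<rho> (int s - 1) = - ((-1) ^ s * of_real (L s))"
    using uu_eq_L[of "s + 3"] uu_eq_L[of "s + 2"] uu_eq_L[of "s + 1"] uu_eq_L[of s]
    by (simp_all add: ac_simps power_add)
  have m: "of_int (int n - int s - 1) = (of_real m :: complex)"
    and rho: "2 * complex_of_real \<rho> = of_real (a - b)"
    using s_less by (simp_all add: m_def of_nat_diff a_def b_def)
  show ?thesis
    unfolding cc_def Let_def gam u m rho
    by (simp add: normalizer_def algebra_simps)
qed

lemma strategy_support:
  assumes "k \<le> s"
  shows "complex_of_real (strategy k) =
      (1 / cc n v \<rho> s) * complex_of_real ((- v / 2 - \<rho>) ^ k) *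
      (uu v \<rho> (int s - int k + 1)
       + complex_of_real (real s + 1 - real n + v / 2 + \<rho>) * uu v \<rho> (int s - int k)
       + complex_of_real ((real s + 1 - real n) * (v / 2 + \<rho>)) * uu v \<rho> (int s - int k - 1))"
proof -
  define J where "J = s - k"
  have idx: "int s - int k + 1 = int (J + 2) - 1" "int s - int k = int (J + 1) - 1"
    "int s - int k - 1 = int J - 1"
    using assms by (simp_all add: J_def)
  have u2: "uu v \<rho> (int s - int k + 1) = of_real ((-1) ^ Suc (J + 2) * L (J + 2))"
    unfolding idx(1) by (rule uu_eq_L)
  have u1: "uu v \<rho> (int s - int k) = of_real ((-1) ^ Suc (J + 1) * L (J + 1))"
    unfolding idx(2) by (rule uu_eq_L)
  have u0: "uu v \<rho> (int s - int k - 1) = of_real ((-1) ^ Suc J * L J)"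
    unfolding idx(3) by (rule uu_eq_L)
  have coeff: "real s + 1 - real n + v / 2 + \<rho> = a - m" "(real s + 1 - real n) * (v / 2 + \<rho>) = - (m * a)"
    "- v / 2 - \<rho> = - a"
    by (simp_all add: a_def m_def algebra_simps)
  have "J + k = s" using assms by (simp add: J_def)
  then have sign: "(- a) ^ k * (-1) ^ J = (-1) ^ s * a ^ k"
    by (simp add: power_minus[of a k] mult_ac flip: power_add)
  define X where "X = (-1) ^ Suc (J + 2) * L (J + 2) + (a - m) * ((-1) ^ Suc (J + 1) * L (J + 1))
      + - (m * a) * ((-1) ^ Suc J * L J)"
  have "X = - ((-1) ^ J * f J)"
    by (simp add: X_def f_def algebra_simps)
  have "strategy k = ((-1) ^ s * a ^ k) * f J / ((-1) ^ s * normalizer s)"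
    using assms by (simp add: strategy_def weight_def J_def[symmetric])
  also have "\<dots> = 1 / ((-1) ^ Suc s * normalizer s) * ((- a) ^ k * X)"
    unfolding sign[symmetric] \<open>X = - ((-1) ^ J * f J)\<close> by (simp add: mult_ac)
  finally have "strategy k = 1 / ((-1) ^ Suc s * normalizer s) * ((- a) ^ k * X)" .
  then show ?thesis
    unfolding u2 u1 u0 coeff cc_eq_normalizer X_def by simp
qed

lemma strategy_last:
  "complex_of_real (strategy n) = (1 / cc n v \<rho> s) * complex_of_real ((- v / 2 - \<rho>) ^ (s + 1))"
proof -
  have "- v / 2 - \<rho> = - a" by (simp add: a_def)
  then have "(- v / 2 - \<rho>) ^ (s + 1) = (-1) ^ Suc s * a ^ (s + 1)"
    by (simp add: power_minus[of a])
  then show ?thesis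
    using s_less normalizer_pos by (simp add: cc_eq_normalizer strategy_def weight_def)
qed

lemma strategy_eq_0: "s < k \<Longrightarrow> k < n \<Longrightarrow> strategy k = 0"
  by (simp add: strategy_def weight_eq_0)

end

lemma support_index_ex1:
  assumes "\<rho> < v / 2" "v / 2 - \<rho> < real n"
  shows "\<exists>!s. s < n \<and> real n - 1 + \<rho> \<le> v / 2 + real s \<and> v / 2 + real s < real n + \<rho>"
proof -
  define s where "s = n - 1 - nat \<lfloor>v / 2 - \<rho>\<rfloor>"
  have "real (nat \<lfloor>v / 2 - \<rho>\<rfloor>) = of_int \<lfloor>v / 2 - \<rho>\<rfloor>" using assms(1) by simp
  then have "real s = real n - 1 - of_int \<lfloor>v / 2 - \<rho>\<rfloor>"
    using assms unfolding s_def by (simp add: of_nat_diff) linarith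
  then have s: "s < n \<and> real n - 1 + \<rho> \<le> v / 2 + real s \<and> v / 2 + real s < real n + \<rho>"
    using assms by linarith
  then show ?thesis
  proof (rule ex1I)
    fix s' assume "s' < n \<and> real n - 1 + \<rho> \<le> v / 2 + real s' \<and> v / 2 + real s' < real n + \<rho>"
    then have "real s' < real (s + 1)" "real s < real (s' + 1)" using s by simp_all
    then show "s' = s" by (simp only: of_nat_less_iff)
  qed
qed

theorem theorem5p2:
  fixes n :: nat and v \<rho> :: real
  assumes "n \<ge> 1" and "v > 0" and "0 \<le> \<rho>" and "\<rho> < v / 2"
  shows "\<exists>p. ESS n (payoffB v \<rho>) p
    \<and> (\<forall>q. ESS n (payoffB v \<rho>) q \<longrightarrow> (\<forall>j\<le>n. q j = p j))
    \<and> (if v \<ge> 2 * real n + 2 * \<rho> then (\<forall>k<n. p k = 0) \<and> p n = 1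
       else (\<exists>!s. s < n \<and> real n - 1 + \<rho> \<le> v / 2 + real s \<and> v / 2 + real s < real n + \<rho>)
         \<and> (\<forall>s. s < n \<and> real n - 1 + \<rho> \<le> v / 2 + real s \<and> v / 2 + real s < real n + \<rho> \<longrightarrow>
              (\<forall>k\<le>s. complex_of_real (p k) =
                  (1 / cc n v \<rho> s) * complex_of_real ((- v / 2 - \<rho>) ^ k) *
                  (uu v \<rho> (int s - int k + 1)
                   + complex_of_real (real s + 1 - real n + v / 2 + \<rho>) * uu v \<rho> (int s - int k)
                   + complex_of_real ((real s + 1 - real n) * (v / 2 + \<rho>)) * uu v \<rho> (int s - int k - 1)))
            \<and> (\<forall>k. s + 1 \<le> k \<and> k \<le> n - 1 \<longrightarrow> p k = 0)
            \<and> complex_of_real (p n) = (1 / cc n v \<rho> s) * complex_of_real ((- v / 2 - \<rho>) ^ (s + 1))))"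
proof (cases "v \<ge> 2 * real n + 2 * \<rho>")
  case True
  then show ?thesis
    using nash_imp_unique_ESS[OF negdef_payoffB[OF assms(3)] last_pure_nash[OF True]]
    by (intro exI[of _ "\<lambda>k. if k = n then 1 else 0"]) simp
next
  case False
  then have s_unique: "\<exists>!s. s < n \<and> real n - 1 + \<rho> \<le> v / 2 + real s \<and> v / 2 + real s < real n + \<rho>"
    using support_index_ex1[OF assms(4)] by simp
  then obtain s where s: "s < n" "real n - 1 + \<rho> \<le> v / 2 + real s" "v / 2 + real s < real n + \<rho>"
    by blast
  interpret support_index n s v \<rho>
    using assms s by unfold_locales auto
  have cond_iff: "(s' < n \<and> real n - 1 + \<rho> \<le> v / 2 + real s' \<and> v / 2 + real s' < real n + \<rho>)
      \<longleftrightarrow> s' = s" for s'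
    using s_unique s by blast
  have "\<forall>k. s + 1 \<le> k \<and> k \<le> n - 1 \<longrightarrow> strategy k = 0"
    using s strategy_eq_0 by auto
  then show ?thesis
    unfolding if_not_P[OF False] cond_iff
    using nash_imp_unique_ESS[OF negdef_payoffB[OF assms(3)] strategy_nash] strategy_support strategy_last
    by (intro exI[of _ strategy]) simp
qed

end
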